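(* Let $d\ge1$ and for $k=1,2$ let $(\boldsymbol X_k,Y_k)=(X_{k,1},\ldots,X_{k,d},Y_k)$ be a random vector with continuous marginals and $(d+1)$-dimensional copula $C_k$. Fix $\boldsymbol{\alpha}\in[0,1)^d$ with $C_k(\boldsymbol\alpha,1)<1$, and set $l_{\boldsymbol\alpha}(v)=\dfrac{v-C_1(\boldsymbol\alpha,v)}{v-C_2(\boldsymbol\alpha,v)}$. Suppose at least one of $C_1,C_2$ is $\mathrm{LTD}^1_{d+1}$ and $l_{\boldsymbol\alpha}(v)\ge l_{\boldsymbol\alpha}(1)$ for all $v\in(0,1]$. (i) If $Y_1\le_{\rm disp}Y_2$, then $\Delta\mathrm{VCoVaR}_{\boldsymbol\alpha,\beta}(Y_1|\boldsymbol X_1)\le\Delta\mathrm{VCoVaR}_{\boldsymbol\alpha,\beta}(Y_2|\boldsymbol X_2)$ for all $\beta\in(0,1)$. (ii) If $Y_1\le_\star Y_2$, then $\Delta^R\mathrm{VCoVaR}_{\boldsymbol\alpha,\beta}(Y_1|\boldsymbol X_1)\le\Delta^R\mathrm{VCoVaR}_{\boldsymbol\alpha,\beta}(Y_2|\boldsymbol X_2)$ for all $\beta\in(0,1)$.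
   Context: $C(\boldsymbol{\alpha},v)=C(\alpha_1,\ldots,\alpha_d,v)$. $F^{-1}(t)=\inf\{x:F(x)\ge t\}$, $\mathrm{VaR}_t(Z)=F_Z^{-1}(t)$. $\mathrm{VCoVaR}_{\boldsymbol\alpha,\beta}(Y_k|\boldsymbol X_k)$ is the $\beta$-quantile of the conditional distribution of $Y_k$ given $\{\exists\, i: X_{k,i}>\mathrm{VaR}_{\alpha_i}(X_{k,i})\}$. $\Delta\mathrm{VCoVaR}_{\boldsymbol\alpha,\beta}(Y|\boldsymbol X)=\mathrm{VCoVaR}_{\boldsymbol\alpha,\beta}(Y|\boldsymbol X)-\mathrm{VaR}_\beta(Y)$ and $\Delta^R\mathrm{VCoVaR}_{\boldsymbol\alpha,\beta}(Y|\boldsymbol X)=\Delta\mathrm{VCoVaR}_{\boldsymbol\alpha,\beta}(Y|\boldsymbol X)/\mathrm{VaR}_\beta(Y)$. A $(d+1)$-dimensional copula $C$ is $\mathrm{LTD}^1_{d+1}$ if, for $(U_1,\ldots,U_d,V)\sim C$, $P(U_1\le u_1,\ldots,U_d\le u_d\mid V\le v)$ is nonincreasing in $v$ for all $u_1,\ldots,u_d$ (i.e. $C(u_1,\ldots,u_d,v)/v$ is nonincreasing in $v$). Orders: $Y_1\le_{\rm disp}Y_2$ if $F_{Y_1}^{-1}(v)-F_{Y_1}^{-1}(u)\le F_{Y_2}^{-1}(v)-F_{Y_2}^{-1}(u)$ for all $0<u\le v<1$; $Y_1\le_\star Y_2$ if $F_{Y_2}^{-1}(u)/F_{Y_1}^{-1}(u)$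 is increasing in $u\in(0,1)$. *)

theory Defs
  imports "HOL-Probability.Probability"
begin

definition dfun :: "'a measure \<Rightarrow> ('a \<Rightarrow> real) \<Rightarrow> real \<Rightarrow> real" where
  "dfun M Z x = measure M {\<omega> \<in> space M. Z \<omega> \<le> x}"

text \<open>Generalised inverse F^{-1}(t) = inf {x. F x >= t}, valued in the extended reals
  (so that e.g. F^{-1}(0) = -infinity is represented correctly).\<close>
definition gen_inv :: "(real \<Rightarrow> real) \<Rightarrow> real \<Rightarrow> ereal" where
  "gen_inv F t = Inf (ereal ` {x. t \<le> F x})"

definition VaR :: "'a measure \<Rightarrow> ('a \<Rightarrow> real) \<Rightarrow> real \<Rightarrow> ereal" where
  "VaR M Z t = gen_inv (dfun M Z) t"

definition cont_marginals :: "'a measure \<Rightarrow> ('a \<Rightarrow> 'd \<Rightarrow> real) \<Rightarrow> ('a \<Rightarrow> real) \<Rightarrow> bool" where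
  "cont_marginals M X Y \<longleftrightarrow>
     (\<forall>i. continuous_on UNIV (dfun M (\<lambda>\<omega>. X \<omega> i))) \<and> continuous_on UNIV (dfun M Y)"

definition is_copula_of ::
  "'a measure \<Rightarrow> ('a \<Rightarrow> 'd \<Rightarrow> real) \<Rightarrow> ('a \<Rightarrow> real) \<Rightarrow> (('d \<Rightarrow> real) \<Rightarrow> real \<Rightarrow> real) \<Rightarrow> bool" where
  "is_copula_of M X Y C \<longleftrightarrow>
     (\<forall>u v. (\<forall>i. 0 \<le> u i \<and> u i \<le> 1) \<longrightarrow> 0 \<le> v \<longrightarrow> v \<le> 1 \<longrightarrow>
        C u v = measure M {\<omega> \<in> space M.
                   (\<forall>i. dfun M (\<lambda>\<omega>. X \<omega> i) (X \<omega> i) \<le> u i) \<and> dfun M Y (Y \<omega>) \<le> v})"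

definition LTD1 :: "(('d \<Rightarrow> real) \<Rightarrow> real \<Rightarrow> real) \<Rightarrow> bool" where
  "LTD1 C \<longleftrightarrow> (\<forall>u v v'. (\<forall>i. 0 \<le> u i \<and> u i \<le> 1) \<longrightarrow> 0 < v \<longrightarrow> v \<le> v' \<longrightarrow> v' \<le> 1 \<longrightarrow>
                   C u v' / v' \<le> C u v / v)"

definition stress_event :: "'a measure \<Rightarrow> ('a \<Rightarrow> 'd \<Rightarrow> real) \<Rightarrow> ('d \<Rightarrow> real) \<Rightarrow> 'a set" where
  "stress_event M X \<alpha> = {\<omega> \<in> space M. \<exists>i. ereal (X \<omega> i) > VaR M (\<lambda>\<omega>. X \<omega> i) (\<alpha> i)}"

definition VCoVaR ::
  "'a measure \<Rightarrow> ('a \<Rightarrow> 'd \<Rightarrow> real) \<Rightarrow> ('a \<Rightarrow> real) \<Rightarrow> ('d \<Rightarrow> real) \<Rightarrow> real \<Rightarrow> ereal" where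
  "VCoVaR M X Y \<alpha> \<beta> =
     gen_inv (\<lambda>y. measure M ({\<omega> \<in> space M. Y \<omega> \<le> y} \<inter> stress_event M X \<alpha>)
                    / measure M (stress_event M X \<alpha>)) \<beta>"

definition DeltaVCoVaR ::
  "'a measure \<Rightarrow> ('a \<Rightarrow> 'd \<Rightarrow> real) \<Rightarrow> ('a \<Rightarrow> real) \<Rightarrow> ('d \<Rightarrow> real) \<Rightarrow> real \<Rightarrow> real" where
  "DeltaVCoVaR M X Y \<alpha> \<beta> = real_of_ereal (VCoVaR M X Y \<alpha> \<beta>) - real_of_ereal (VaR M Y \<beta>)"

definition DeltaR_VCoVaR ::
  "'a measure \<Rightarrow> ('a \<Rightarrow> 'd \<Rightarrow> real) \<Rightarrow> ('a \<Rightarrow> real) \<Rightarrow> ('d \<Rightarrow> real) \<Rightarrow> real \<Rightarrow> real" where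
  "DeltaR_VCoVaR M X Y \<alpha> \<beta> = DeltaVCoVaR M X Y \<alpha> \<beta> / real_of_ereal (VaR M Y \<beta>)"

definition disp_le :: "'a measure \<Rightarrow> ('a \<Rightarrow> real) \<Rightarrow> 'b measure \<Rightarrow> ('b \<Rightarrow> real) \<Rightarrow> bool" where
  "disp_le M1 Y1 M2 Y2 \<longleftrightarrow> (\<forall>u v. 0 < u \<longrightarrow> u \<le> v \<longrightarrow> v < 1 \<longrightarrow>
      real_of_ereal (VaR M1 Y1 v) - real_of_ereal (VaR M1 Y1 u)
        \<le> real_of_ereal (VaR M2 Y2 v) - real_of_ereal (VaR M2 Y2 u))"

text \<open>Star order Y1 <=* Y2 (quantile ratio increasing; quantiles assumed positive so that
  the ratio is defined, as in the usual setting of positive random variables).\<close>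
definition star_le :: "'a measure \<Rightarrow> ('a \<Rightarrow> real) \<Rightarrow> 'b measure \<Rightarrow> ('b \<Rightarrow> real) \<Rightarrow> bool" where
  "star_le M1 Y1 M2 Y2 \<longleftrightarrow>
     (\<forall>u. 0 < u \<longrightarrow> u < 1 \<longrightarrow> 0 < real_of_ereal (VaR M1 Y1 u) \<and> 0 < real_of_ereal (VaR M2 Y2 u)) \<and>
     (\<forall>u v. 0 < u \<longrightarrow> u \<le> v \<longrightarrow> v < 1 \<longrightarrow>
      real_of_ereal (VaR M2 Y2 u) / real_of_ereal (VaR M1 Y1 u)
        \<le> real_of_ereal (VaR M2 Y2 v) / real_of_ereal (VaR M1 Y1 v))"

end

theory Submission
  imports Defs
begin

(* Conditioning on the stress event turns the distribution of the probability integral transform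
   F_Y(Y) into the distortion h(v) = (v - C(alpha,v)) / (1 - C(alpha,1)), a continuous nondecreasing
   map of [0,1] onto itself; hence VCoVaR_{alpha,beta}(Y|X) = VaR_gamma(Y) for the least gamma with
   h(gamma) >= beta.  The hypothesis on l_alpha says exactly h_2 <= h_1, so gamma_1 <= gamma_2, and
   LTD of either copula gives h <= id, so beta <= gamma_2.  For such ordered levels the dispersive
   (star) order of Y_1, Y_2 and the monotonicity of their quantile functions compare the (relative)
   increments VaR_gamma - VaR_beta. *)

lemma continuous_cdf_attains:
  fixes F :: "real \<Rightarrow> real"
  assumes cont: "continuous_on UNIV F" and top: "(F \<longlongrightarrow> 1) at_top" and bot: "(F \<longlongrightarrow> 0) at_bot"
    and t: "0 < t" "t < 1"
  shows "\<exists>y. F y = t"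
proof -
  obtain a where a: "F a < t"
    using eventually_happens'[OF _ order_tendstoD(2)[OF bot t(1)]] by auto
  obtain N where "\<And>x. N \<le> x \<Longrightarrow> t < F x"
    using order_tendstoD(1)[OF top t(2)] by (auto simp: eventually_at_top_linorder)
  then have b: "t < F (max a N)" "a \<le> max a N" by auto
  show ?thesis
    using IVT'[of F a t "max a N"] a b continuous_on_subset[OF cont] by auto
qed

lemma gen_inv_continuous_cdf:
  fixes F :: "real \<Rightarrow> real"
  assumes mono: "mono F" and cont: "continuous_on UNIV F"
    and top: "(F \<longlongrightarrow> 1) at_top" and bot: "(F \<longlongrightarrow> 0) at_bot"
    and t: "0 < t" "t < 1"
  shows "\<exists>r. gen_inv F t = ereal r \<and> F r = t \<and> (\<forall>x. t \<le> F x \<longleftrightarrow> r \<le> x)"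
proof -
  define S where "S = {x. t \<le> F x}"
  obtain y where y: "F y = t" using continuous_cdf_attains[OF cont top bot t] by blast
  have ne: "S \<noteq> {}" using y by (auto simp: S_def)
  obtain a where a: "\<And>x. x \<le> a \<Longrightarrow> F x < t"
    using order_tendstoD(2)[OF bot t(1)] by (auto simp: eventually_at_bot_linorder)
  have "a \<le> x" if "x \<in> S" for x
    using a[of x] that by (cases "x \<le> a") (auto simp: S_def)
  then have bdd: "bdd_below S" by (rule bdd_belowI)
  have "closed S" unfolding S_def using cont by (intro closed_Collect_le continuous_intros) auto
  then have rS: "Inf S \<in> S" using closed_contains_Inf[OF ne bdd] by simp
  have "F (Inf S) \<le> F y" using y bdd by (intro monoD[OF mono] cInf_lower) (auto simp: S_def)
  with rS y have Fr: "F (Inf S) = t" by (simp add: S_def)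
  have "t \<le> F x \<longleftrightarrow> Inf S \<le> x" for x
    using bdd Fr monoD[OF mono, of "Inf S" x] by (auto simp: S_def intro: cInf_lower)
  moreover have "gen_inv F t = ereal (Inf S)"
    unfolding gen_inv_def S_def[symmetric] using ereal_Inf'[OF bdd ne] by simp
  ultimately show ?thesis using Fr by blast
qed

lemma gen_inv_0:
  assumes "\<And>x. 0 \<le> F x"
  shows "gen_inv F 0 = - \<infinity>"
proof -
  have "\<forall>B. Inf (range ereal) \<le> ereal B" by (auto intro: Inf_lower)
  then have "Inf (range ereal) = - \<infinity>" using ereal_bot by blast
  then show ?thesis using assms by (simp add: gen_inv_def)
qed

lemma gen_inv_mono: "s \<le> t \<Longrightarrow> gen_inv F s \<le> gen_inv F t"
  unfolding gen_inv_def by (rule Inf_superset_mono) auto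

lemma gen_inv_comp:
  fixes h F :: "real \<Rightarrow> real"
  assumes cont: "continuous_on {0..1} h" and mono: "mono_on {0..1} h"
    and h0: "h 0 = 0" and h1: "h 1 = 1" and F: "\<And>y. 0 \<le> F y \<and> F y \<le> 1"
    and \<beta>: "0 < \<beta>" "\<beta> < 1"
  shows "\<exists>\<gamma>. 0 < \<gamma> \<and> \<gamma> < 1 \<and> gen_inv (\<lambda>y. h (F y)) \<beta> = gen_inv F \<gamma>
           \<and> (\<forall>v\<in>{0..1}. \<beta> \<le> h v \<longleftrightarrow> \<gamma> \<le> v)"
proof -
  define K where "K = {0..1} \<inter> h -` {\<beta>..}"
  have "closed K" unfolding K_def using continuous_closed_preimage[OF cont] by auto
  moreover have "1 \<in> K" "bdd_below K" using h1 \<beta> by (auto simp: K_def intro: bdd_belowI[of _ 0])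
  ultimately have \<gamma>K: "Inf K \<in> K" using closed_contains_Inf by (metis empty_iff)
  obtain x where x: "0 \<le> x" "x \<le> 1" "h x = \<beta>" using IVT'[of h 0 \<beta> 1] cont h0 h1 \<beta> by auto
  have iff: "\<beta> \<le> h v \<longleftrightarrow> Inf K \<le> v" if "v \<in> {0..1}" for v
    using that \<gamma>K mono_onD[OF mono, of "Inf K" v] \<open>bdd_below K\<close>
    by (auto simp: K_def intro: cInf_lower)
  have "Inf K < 1" using iff[of x] x h1 \<beta> by (cases "x = 1") auto
  moreover have "0 < Inf K" using \<gamma>K h0 \<beta> by (cases "Inf K = 0") (auto simp: K_def)
  moreover have "{y. \<beta> \<le> h (F y)} = {y. Inf K \<le> F y}" using iff F by auto
  ultimately show ?thesis using iff by (auto simp: gen_inv_def)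
qed

lemma (in finite_measure) AE_iff_of_imp_measure_eq:
  assumes imp: "\<And>x. x \<in> space M \<Longrightarrow> P x \<Longrightarrow> Q x"
    and sets: "{x \<in> space M. P x} \<in> sets M" "{x \<in> space M. Q x} \<in> sets M"
    and eq: "measure M {x \<in> space M. P x} = measure M {x \<in> space M. Q x}"
  shows "AE x in M. P x \<longleftrightarrow> Q x"
proof (rule AE_I')
  let ?N = "{x \<in> space M. Q x} - {x \<in> space M. P x}"
  have "measure M ?N = 0"
    using sets eq imp by (subst finite_measure_Diff) auto
  then show "?N \<in> null_sets M"
    using sets by (auto simp: emeasure_eq_measure)
  show "{x \<in> space M. \<not> (P x \<longleftrightarrow> Q x)} \<subseteq> ?N" using imp by auto
qed

context prob_space
begin

lemma dfun_eq_cdf: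
  assumes "Z \<in> borel_measurable M"
  shows "dfun M Z = cdf (distr M borel Z)"
proof
  fix x
  have "{\<omega> \<in> space M. Z \<omega> \<le> x} = Z -` {..x} \<inter> space M" by auto
  then show "dfun M Z x = cdf (distr M borel Z) x"
    using assms by (simp add: dfun_def cdf_def measure_distr)
qed

lemma
  assumes Z: "Z \<in> borel_measurable M"
  shows mono_dfun: "mono (dfun M Z)"
    and dfun_nonneg: "0 \<le> dfun M Z x"
    and dfun_le_1: "dfun M Z x \<le> 1"
    and dfun_at_top: "(dfun M Z \<longlongrightarrow> 1) at_top"
    and dfun_at_bot: "(dfun M Z \<longlongrightarrow> 0) at_bot"
proof -
  interpret D: real_distribution "distr M borel Z" using Z by simp
  show "mono (dfun M Z)" by (simp add: dfun_eq_cdf[OF Z] D.cdf_nondecreasing monoI)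
  show "0 \<le> dfun M Z x" "dfun M Z x \<le> 1" "(dfun M Z \<longlongrightarrow> 1) at_top" "(dfun M Z \<longlongrightarrow> 0) at_bot"
    by (simp_all add: dfun_eq_cdf[OF Z] D.cdf_nonneg D.cdf_bounded_prob D.cdf_lim_at_top_prob D.cdf_lim_at_bot)
qed

lemma VaR_continuous_dfun:
  assumes Z: "Z \<in> borel_measurable M" and cont: "continuous_on UNIV (dfun M Z)"
    and t: "0 < t" "t < 1"
  shows "\<exists>r. VaR M Z t = ereal r \<and> dfun M Z r = t \<and> (\<forall>x. t \<le> dfun M Z x \<longleftrightarrow> r \<le> x)"
  unfolding VaR_def
  using gen_inv_continuous_cdf[OF mono_dfun[OF Z] cont dfun_at_top[OF Z] dfun_at_bot[OF Z] t] .

lemma mono_on_VaR: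
  assumes Z: "Z \<in> borel_measurable M" and cont: "continuous_on UNIV (dfun M Z)"
  shows "mono_on {0<..<1} (\<lambda>t. real_of_ereal (VaR M Z t))"
proof (rule mono_onI)
  fix s t :: real assume "s \<in> {0<..<1}" "t \<in> {0<..<1}" "s \<le> t"
  moreover have "VaR M Z s \<le> VaR M Z t" unfolding VaR_def using \<open>s \<le> t\<close> by (rule gen_inv_mono)
  ultimately show "real_of_ereal (VaR M Z s) \<le> real_of_ereal (VaR M Z t)"
    using VaR_continuous_dfun[OF Z cont, of s] VaR_continuous_dfun[OF Z cont, of t] by auto
qed

lemma measurable_dfun_comp:
  assumes "Z \<in> borel_measurable M" "continuous_on UNIV (dfun M Z)"
  shows "(\<lambda>\<omega>. dfun M Z (Z \<omega>)) \<in> borel_measurable M"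
  using measurable_comp[OF assms(1) borel_measurable_continuous_onI[OF assms(2)]] by (simp add: o_def)

lemma prob_dfun_comp_le_upper:
  assumes Z: "Z \<in> borel_measurable M" and cont: "continuous_on UNIV (dfun M Z)"
    and t: "0 \<le> t" "t < 1"
  shows "prob {\<omega> \<in> space M. dfun M Z (Z \<omega>) \<le> t} \<le> t"
proof -
  define T where "T = {x. dfun M Z x \<le> t}"
  show ?thesis
  proof (cases "T = {}")
    case True
    then show ?thesis using t by (auto simp: T_def)
  next
    case False
    obtain N where N: "\<And>x. N \<le> x \<Longrightarrow> t < dfun M Z x"
      using order_tendstoD(1)[OF dfun_at_top[OF Z] t(2)] by (auto simp: eventually_at_top_linorder)
    have "x \<le> N" if "x \<in> T" for x
      using N[of x] that by (cases "N \<le> x") (auto simp: T_def)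
    then have bdd: "bdd_above T" by (rule bdd_aboveI)
    have "closed T" unfolding T_def using cont by (intro closed_Collect_le continuous_intros) auto
    then have "Sup T \<in> T" using closed_contains_Sup[OF False bdd] by simp
    have "{\<omega> \<in> space M. dfun M Z (Z \<omega>) \<le> t} \<subseteq> {\<omega> \<in> space M. Z \<omega> \<le> Sup T}"
      using bdd by (auto simp: T_def intro: cSup_upper)
    then have "prob {\<omega> \<in> space M. dfun M Z (Z \<omega>) \<le> t} \<le> dfun M Z (Sup T)"
      unfolding dfun_def using Z by (intro finite_measure_mono) auto
    also have "\<dots> \<le> t" using \<open>Sup T \<in> T\<close> by (simp add: T_def)
    finally show ?thesis .
  qed
qed

lemma prob_dfun_comp_le:
  assumes Z: "Z \<in> borel_measurable M" and cont: "continuous_on UNIV (dfun M Z)"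
    and t: "0 \<le> t" "t \<le> 1"
  shows "prob {\<omega> \<in> space M. dfun M Z (Z \<omega>) \<le> t} = t"
proof -
  note [measurable] = measurable_dfun_comp[OF Z cont]
  consider "t = 0" | "0 < t" "t < 1" | "t = 1" using t by linarith
  then show ?thesis
  proof cases
    case 1
    then show ?thesis
      using prob_dfun_comp_le_upper[OF Z cont, of 0] by (simp add: order_antisym measure_nonneg)
  next
    case 2
    then obtain y where y: "dfun M Z y = t"
      using continuous_cdf_attains[OF cont dfun_at_top[OF Z] dfun_at_bot[OF Z]] by blast
    have "{\<omega> \<in> space M. Z \<omega> \<le> y} \<subseteq> {\<omega> \<in> space M. dfun M Z (Z \<omega>) \<le> t}"
      using y monoD[OF mono_dfun[OF Z]] by auto
    then have "prob {\<omega> \<in> space M. Z \<omega> \<le> y} \<le> prob {\<omega> \<in> space M. dfun M Z (Z \<omega>) \<le> t}"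
      by (rule finite_measure_mono) measurable
    then have "t \<le> prob {\<omega> \<in> space M. dfun M Z (Z \<omega>) \<le> t}"
      using y by (simp add: dfun_def)
    then show ?thesis using prob_dfun_comp_le_upper[OF Z cont, of t] 2 by linarith
  next
    case 3
    then show ?thesis using dfun_le_1[OF Z] prob_space by auto
  qed
qed

lemma AE_le_iff_dfun_le:
  assumes Z: "Z \<in> borel_measurable M" and cont: "continuous_on UNIV (dfun M Z)"
  shows "AE \<omega> in M. Z \<omega> \<le> y \<longleftrightarrow> dfun M Z (Z \<omega>) \<le> dfun M Z y"
proof -
  note [measurable] = Z measurable_dfun_comp[OF Z cont]
  show ?thesis
  proof (rule AE_iff_of_imp_measure_eq)
    show "dfun M Z (Z \<omega>) \<le> dfun M Z y" if "Z \<omega> \<le> y" for \<omega>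
      using monoD[OF mono_dfun[OF Z] that] .
    have "prob {\<omega> \<in> space M. dfun M Z (Z \<omega>) \<le> dfun M Z y} = dfun M Z y"
      using dfun_nonneg[OF Z] dfun_le_1[OF Z] by (intro prob_dfun_comp_le[OF Z cont])
    then show "prob {\<omega> \<in> space M. Z \<omega> \<le> y} = prob {\<omega> \<in> space M. dfun M Z (Z \<omega>) \<le> dfun M Z y}"
      unfolding dfun_def[of M Z y] by simp
  qed measurable
qed

lemma AE_le_VaR_iff_dfun_le:
  assumes Z: "Z \<in> borel_measurable M" and cont: "continuous_on UNIV (dfun M Z)"
    and a: "0 \<le> a" "a < 1"
  shows "AE \<omega> in M. ereal (Z \<omega>) \<le> VaR M Z a \<longleftrightarrow> dfun M Z (Z \<omega>) \<le> a"
proof (cases "a = 0")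
  case True
  have "VaR M Z 0 = - \<infinity>" unfolding VaR_def using dfun_nonneg[OF Z] by (rule gen_inv_0)
  moreover have "AE \<omega> in M. False \<longleftrightarrow> dfun M Z (Z \<omega>) \<le> 0"
    using prob_dfun_comp_le[OF Z cont, of 0] measurable_dfun_comp[OF Z cont]
    by (intro AE_iff_of_imp_measure_eq) simp_all
  ultimately show ?thesis using True by simp
next
  case False
  with a obtain r where "VaR M Z a = ereal r" "dfun M Z r = a"
    using VaR_continuous_dfun[OF Z cont, of a] by auto
  then show ?thesis using AE_le_iff_dfun_le[OF Z cont, of r] by simp
qed

end

(* The distribution function of F_Y(Y) given the stress event (cf. VCoVaR_eq_VaR);
   it is junk (division by 0) unless C alpha 1 < 1. *)
definition stress_distortion ::
    "(('d \<Rightarrow> real) \<Rightarrow> real \<Rightarrow> real) \<Rightarrow> ('d \<Rightarrow> real) \<Rightarrow> real \<Rightarrow> real" where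
  "stress_distortion C \<alpha> v = (v - C \<alpha> v) / (1 - C \<alpha> 1)"

lemma divide_le_divide_swap:
  fixes a1 a2 x1 x2 :: real
  assumes a: "0 < a1" "0 < a2" and x2: "0 \<le> x2" and le: "a1 / a2 \<le> x1 / x2"
  shows "x2 / a2 \<le> x1 / a1"
proof -
  have "x2 \<noteq> 0" using a le by (auto simp: divide_le_0_iff)
  with x2 le a show ?thesis by (simp add: field_simps)
qed

lemma LTD1_stress_distortion_le:
  assumes "LTD1 C" and u: "\<And>i. 0 \<le> u i \<and> u i \<le> 1" and v: "0 < v" "v \<le> 1" and Cu: "C u 1 < 1"
  shows "stress_distortion C u v \<le> v"
proof -
  have "C u 1 / 1 \<le> C u v / v" using assms unfolding LTD1_def by blast
  then have "v - C u v \<le> v * (1 - C u 1)" using v by (simp add: field_simps)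
  then show ?thesis using Cu by (simp add: stress_distortion_def pos_divide_le_eq)
qed

locale copula_model = prob_space M
  for M :: "'a measure" and X :: "'a \<Rightarrow> 'd::finite \<Rightarrow> real" and Y :: "'a \<Rightarrow> real"
    and C :: "('d \<Rightarrow> real) \<Rightarrow> real \<Rightarrow> real" +
  assumes measurable_X[measurable]: "\<And>i. (\<lambda>\<omega>. X \<omega> i) \<in> borel_measurable M"
    and measurable_Y[measurable]: "Y \<in> borel_measurable M"
    and continuous_marginals: "cont_marginals M X Y"
    and copula: "is_copula_of M X Y C"
begin

lemma continuous_dfun_X: "continuous_on UNIV (dfun M (\<lambda>\<omega>. X \<omega> i))"
  and continuous_dfun_Y: "continuous_on UNIV (dfun M Y)"
  using continuous_marginals by (auto simp: cont_marginals_def)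

lemma measurable_dfun_X[measurable]: "(\<lambda>\<omega>. dfun M (\<lambda>\<omega>. X \<omega> i) (X \<omega> i)) \<in> borel_measurable M"
  using measurable_dfun_comp[OF measurable_X continuous_dfun_X] .

lemma measurable_dfun_Y[measurable]: "(\<lambda>\<omega>. dfun M Y (Y \<omega>)) \<in> borel_measurable M"
  using measurable_dfun_comp[OF measurable_Y continuous_dfun_Y] .

lemma mono_on_VaR_Y: "mono_on {0<..<1} (\<lambda>t. real_of_ereal (VaR M Y t))"
  using mono_on_VaR[OF measurable_Y continuous_dfun_Y] .

lemma copula_eq_prob:
  assumes "\<And>i. 0 \<le> u i \<and> u i \<le> 1" "0 \<le> v" "v \<le> 1"
  shows "C u v = prob {\<omega> \<in> space M. (\<forall>i. dfun M (\<lambda>\<omega>. X \<omega> i) (X \<omega> i) \<le> u i) \<and> dfun M Y (Y \<omega>) \<le> v}"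
  using copula assms unfolding is_copula_of_def by blast

context
  fixes u :: "'d \<Rightarrow> real"
  assumes u: "\<And>i. 0 \<le> u i \<and> u i \<le> 1"
begin

lemma copula_0: "C u 0 = 0"
proof -
  have "prob {\<omega> \<in> space M. (\<forall>i. dfun M (\<lambda>\<omega>. X \<omega> i) (X \<omega> i) \<le> u i) \<and> dfun M Y (Y \<omega>) \<le> 0}
      \<le> prob {\<omega> \<in> space M. dfun M Y (Y \<omega>) \<le> 0}"
    by (intro finite_measure_mono) auto
  then show ?thesis
    using copula_eq_prob[OF u, of 0] prob_dfun_comp_le[OF measurable_Y continuous_dfun_Y, of 0]
    by (simp add: order_antisym measure_nonneg)
qed

lemma copula_mono:
  assumes "0 \<le> v" "v \<le> w" "w \<le> 1"
  shows "C u v \<le> C u w"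
  using assms copula_eq_prob[OF u, of v] copula_eq_prob[OF u, of w]
  by (auto intro!: finite_measure_mono)

lemma copula_increment_le:
  assumes vw: "0 \<le> v" "v \<le> w" "w \<le> 1"
  shows "C u w - C u v \<le> w - v"
proof -
  define B where
    "B t = {\<omega> \<in> space M. (\<forall>i. dfun M (\<lambda>\<omega>. X \<omega> i) (X \<omega> i) \<le> u i) \<and> dfun M Y (Y \<omega>) \<le> t}" for t
  define U where "U t = {\<omega> \<in> space M. dfun M Y (Y \<omega>) \<le> t}" for t
  have [measurable]: "B t \<in> sets M" "U t \<in> sets M" for t unfolding B_def U_def by measurable
  have "C u w - C u v = prob (B w - B v)"
    using vw copula_eq_prob[OF u] by (subst finite_measure_Diff) (auto simp: B_def)
  also have "\<dots> \<le> prob (U w - U v)"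
    by (intro finite_measure_mono) (auto simp: B_def U_def)
  also have "\<dots> = w - v"
    using vw prob_dfun_comp_le[OF measurable_Y continuous_dfun_Y]
    by (subst finite_measure_Diff) (auto simp: U_def)
  finally show ?thesis .
qed

lemma copula_le: "0 \<le> v \<Longrightarrow> v \<le> 1 \<Longrightarrow> C u v \<le> v"
  using copula_increment_le[of 0 v] copula_0 by simp

lemma continuous_on_copula: "continuous_on {0..1} (C u)"
proof (rule lipschitz_on_continuous_on)
  show "1-lipschitz_on {0..1} (C u)"
  proof (rule lipschitz_onI)
    fix v w :: real assume "v \<in> {0..1}" "w \<in> {0..1}"
    then show "dist (C u v) (C u w) \<le> 1 * dist v w"
      using copula_mono copula_increment_le
      by (cases "v \<le> w") (fastforce simp: dist_real_def)+
  qed simp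
qed

end

context
  fixes \<alpha> :: "'d \<Rightarrow> real"
  assumes \<alpha>: "\<And>i. 0 \<le> \<alpha> i \<and> \<alpha> i < 1"
begin

lemma sets_stress_event[measurable]: "stress_event M X \<alpha> \<in> sets M"
  unfolding stress_event_def by measurable

lemma AE_notin_stress_event_iff:
  "AE \<omega> in M. \<omega> \<notin> stress_event M X \<alpha> \<longleftrightarrow> (\<forall>i. dfun M (\<lambda>\<omega>. X \<omega> i) (X \<omega> i) \<le> \<alpha> i)"
proof -
  have "AE \<omega> in M. \<forall>i. ereal (X \<omega> i) \<le> VaR M (\<lambda>\<omega>. X \<omega> i) (\<alpha> i)
                       \<longleftrightarrow> dfun M (\<lambda>\<omega>. X \<omega> i) (X \<omega> i) \<le> \<alpha> i"
    using AE_le_VaR_iff_dfun_le[OF measurable_X continuous_dfun_X] \<alpha> by (simp add: AE_all_countable)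
  with AE_space show ?thesis
    by eventually_elim (auto simp: stress_event_def not_less)
qed

lemma prob_diff_stress_event:
  "prob ({\<omega> \<in> space M. Y \<omega> \<le> y} - stress_event M X \<alpha>) = C \<alpha> (dfun M Y y)"
proof -
  let ?B = "{\<omega> \<in> space M.
    (\<forall>i. dfun M (\<lambda>\<omega>. X \<omega> i) (X \<omega> i) \<le> \<alpha> i) \<and> dfun M Y (Y \<omega>) \<le> dfun M Y y}"
  have "AE \<omega> in M. \<omega> \<in> {\<omega> \<in> space M. Y \<omega> \<le> y} - stress_event M X \<alpha> \<longleftrightarrow> \<omega> \<in> ?B"
    using AE_notin_stress_event_iff AE_le_iff_dfun_le[OF measurable_Y continuous_dfun_Y, of y]
      AE_space
    by eventually_elim auto
  then have "prob ({\<omega> \<in> space M. Y \<omega> \<le> y} - stress_event M X \<alpha>) = prob ?B"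
    by (rule measure_eq_AE) measurable
  also have "\<dots> = C \<alpha> (dfun M Y y)"
    using \<alpha> dfun_nonneg[OF measurable_Y] dfun_le_1[OF measurable_Y]
    by (intro copula_eq_prob[symmetric]) (auto intro: less_imp_le)
  finally show ?thesis .
qed

lemma prob_stress_event: "prob (stress_event M X \<alpha>) = 1 - C \<alpha> 1"
proof -
  let ?B = "{\<omega> \<in> space M. (\<forall>i. dfun M (\<lambda>\<omega>. X \<omega> i) (X \<omega> i) \<le> \<alpha> i) \<and> dfun M Y (Y \<omega>) \<le> 1}"
  have "AE \<omega> in M. \<omega> \<in> space M - stress_event M X \<alpha> \<longleftrightarrow> \<omega> \<in> ?B"
    using AE_notin_stress_event_iff AE_space by eventually_elim (auto simp: dfun_le_1[OF measurable_Y])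
  then have "prob (space M - stress_event M X \<alpha>) = prob ?B"
    by (rule measure_eq_AE) measurable
  also have "\<dots> = C \<alpha> 1"
    using \<alpha> by (intro copula_eq_prob[symmetric]) (auto intro: less_imp_le)
  finally show ?thesis by (simp add: prob_compl)
qed

lemma prob_inter_stress_event:
  "prob ({\<omega> \<in> space M. Y \<omega> \<le> y} \<inter> stress_event M X \<alpha>) = dfun M Y y - C \<alpha> (dfun M Y y)"
proof -
  have "{\<omega> \<in> space M. Y \<omega> \<le> y} \<inter> stress_event M X \<alpha>
      = {\<omega> \<in> space M. Y \<omega> \<le> y} - ({\<omega> \<in> space M. Y \<omega> \<le> y} - stress_event M X \<alpha>)" by blast
  then show ?thesis
    using prob_diff_stress_event by (simp add: finite_measure_Diff dfun_def)
qed

lemma VCoVaR_eq_VaR: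
  assumes C\<alpha>: "C \<alpha> 1 < 1" and \<beta>: "0 < \<beta>" "\<beta> < 1"
  shows "\<exists>\<gamma>. 0 < \<gamma> \<and> \<gamma> < 1 \<and> VCoVaR M X Y \<alpha> \<beta> = VaR M Y \<gamma>
           \<and> (\<forall>v\<in>{0..1}. \<beta> \<le> stress_distortion C \<alpha> v \<longleftrightarrow> \<gamma> \<le> v)"
proof -
  let ?h = "stress_distortion C \<alpha>"
  have \<alpha>01: "\<And>i. 0 \<le> \<alpha> i \<and> \<alpha> i \<le> 1" using \<alpha> less_imp_le by blast
  have "continuous_on {0..1} ?h"
    unfolding stress_distortion_def using continuous_on_copula[of \<alpha>, OF \<alpha>01] C\<alpha>
    by (intro continuous_intros) auto
  moreover have "mono_on {0..1} ?h"
    unfolding stress_distortion_def using C\<alpha> copula_increment_le[of \<alpha>, OF \<alpha>01]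
    by (intro mono_onI divide_right_mono) (auto simp: algebra_simps)
  moreover have "?h 0 = 0" "?h 1 = 1"
    using copula_0[of \<alpha>, OF \<alpha>01] C\<alpha> by (simp_all add: stress_distortion_def)
  moreover have "VCoVaR M X Y \<alpha> \<beta> = gen_inv (\<lambda>y. ?h (dfun M Y y)) \<beta>"
    unfolding VCoVaR_def stress_distortion_def prob_inter_stress_event prob_stress_event ..
  ultimately show ?thesis
    using gen_inv_comp[of ?h "dfun M Y"] dfun_nonneg[OF measurable_Y] dfun_le_1[OF measurable_Y] \<beta>
    unfolding VaR_def by auto
qed

end

end

lemma dispersive_increment_le:
  fixes Q1 Q2 :: "real \<Rightarrow> real"
  assumes disp: "\<forall>u v. 0 < u \<longrightarrow> u \<le> v \<longrightarrow> v < 1 \<longrightarrow> Q1 v - Q1 u \<le> Q2 v - Q2 u"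
    and mono: "mono_on {0<..<1} Q1" "mono_on {0<..<1} Q2"
    and levels: "0 < \<beta>" "0 < \<gamma>1" "\<gamma>1 \<le> \<gamma>2" "\<beta> \<le> \<gamma>2" "\<gamma>2 < 1"
  shows "Q1 \<gamma>1 - Q1 \<beta> \<le> Q2 \<gamma>2 - Q2 \<beta>"
proof (cases "\<beta> \<le> \<gamma>1")
  case True
  then have "Q1 \<gamma>1 - Q1 \<beta> \<le> Q2 \<gamma>1 - Q2 \<beta>" using disp levels by auto
  also have "\<dots> \<le> Q2 \<gamma>2 - Q2 \<beta>" using mono_onD[OF mono(2), of \<gamma>1 \<gamma>2] levels by auto
  finally show ?thesis .
next
  case False
  then show ?thesis
    using mono_onD[OF mono(1), of \<gamma>1 \<beta>] mono_onD[OF mono(2), of \<beta> \<gamma>2] levels by auto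
qed

lemma star_relative_increment_le:
  fixes Q1 Q2 :: "real \<Rightarrow> real"
  assumes pos: "\<forall>u. 0 < u \<longrightarrow> u < 1 \<longrightarrow> 0 < Q1 u \<and> 0 < Q2 u"
    and star: "\<forall>u v. 0 < u \<longrightarrow> u \<le> v \<longrightarrow> v < 1 \<longrightarrow> Q2 u / Q1 u \<le> Q2 v / Q1 v"
    and mono: "mono_on {0<..<1} Q1" "mono_on {0<..<1} Q2"
    and levels: "0 < \<beta>" "0 < \<gamma>1" "\<gamma>1 \<le> \<gamma>2" "\<beta> \<le> \<gamma>2" "\<gamma>2 < 1"
  shows "(Q1 \<gamma>1 - Q1 \<beta>) / Q1 \<beta> \<le> (Q2 \<gamma>2 - Q2 \<beta>) / Q2 \<beta>"
proof -
  have pos\<beta>: "0 < Q1 \<beta>" "0 < Q2 \<beta>" and pos\<gamma>: "0 < Q1 \<gamma>1" "0 < Q2 \<gamma>1"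
    using pos levels by auto
  have "Q1 \<gamma>1 / Q1 \<beta> \<le> Q2 \<gamma>2 / Q2 \<beta>"
  proof (cases "\<beta> \<le> \<gamma>1")
    case True
    then have "Q2 \<beta> / Q1 \<beta> \<le> Q2 \<gamma>1 / Q1 \<gamma>1" using star levels by auto
    then have "Q1 \<gamma>1 / Q1 \<beta> \<le> Q2 \<gamma>1 / Q2 \<beta>" using pos\<beta> pos\<gamma> by (simp add: field_simps)
    also have "\<dots> \<le> Q2 \<gamma>2 / Q2 \<beta>"
      using mono_onD[OF mono(2), of \<gamma>1 \<gamma>2] levels pos\<beta> by (simp add: divide_right_mono)
    finally show ?thesis .
  next
    case False
    then have "Q1 \<gamma>1 / Q1 \<beta> \<le> 1" "1 \<le> Q2 \<gamma>2 / Q2 \<beta>"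
      using mono_onD[OF mono(1), of \<gamma>1 \<beta>] mono_onD[OF mono(2), of \<beta> \<gamma>2] levels pos\<beta> by auto
    then show ?thesis by linarith
  qed
  then show ?thesis using pos\<beta> by (simp add: diff_divide_distrib)
qed

lemma VCoVaR_levels_ordered:
  assumes m1: "copula_model M1 X1 Y1 C1" and m2: "copula_model M2 X2 Y2 C2"
    and \<alpha>: "\<And>i. 0 \<le> \<alpha> i \<and> \<alpha> i < 1" and C1\<alpha>: "C1 \<alpha> 1 < 1" and C2\<alpha>: "C2 \<alpha> 1 < 1"
    and LTD: "LTD1 C1 \<or> LTD1 C2"
    and dominated: "\<And>v. 0 < v \<Longrightarrow> v \<le> 1 \<Longrightarrow> stress_distortion C2 \<alpha> v \<le> stress_distortion C1 \<alpha> v"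
    and \<beta>: "0 < \<beta>" "\<beta> < 1"
  obtains \<gamma>1 \<gamma>2 where "0 < \<gamma>1" "\<gamma>1 \<le> \<gamma>2" "\<beta> \<le> \<gamma>2" "\<gamma>2 < 1"
    "VCoVaR M1 X1 Y1 \<alpha> \<beta> = VaR M1 Y1 \<gamma>1" "VCoVaR M2 X2 Y2 \<alpha> \<beta> = VaR M2 Y2 \<gamma>2"
proof -
  have \<alpha>01: "\<And>i. 0 \<le> \<alpha> i \<and> \<alpha> i \<le> 1" using \<alpha> less_imp_le by blast
  obtain \<gamma>1 where \<gamma>1: "0 < \<gamma>1" "\<gamma>1 < 1" "VCoVaR M1 X1 Y1 \<alpha> \<beta> = VaR M1 Y1 \<gamma>1"
    and iff1: "\<forall>v\<in>{0..1}. \<beta> \<le> stress_distortion C1 \<alpha> v \<longleftrightarrow> \<gamma>1 \<le> v"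
    using copula_model.VCoVaR_eq_VaR[OF m1, of \<alpha>, OF \<alpha> C1\<alpha> \<beta>] by blast
  obtain \<gamma>2 where \<gamma>2: "0 < \<gamma>2" "\<gamma>2 < 1" "VCoVaR M2 X2 Y2 \<alpha> \<beta> = VaR M2 Y2 \<gamma>2"
    and iff2: "\<forall>v\<in>{0..1}. \<beta> \<le> stress_distortion C2 \<alpha> v \<longleftrightarrow> \<gamma>2 \<le> v"
    using copula_model.VCoVaR_eq_VaR[OF m2, of \<alpha>, OF \<alpha> C2\<alpha> \<beta>] by blast
  have "\<beta> \<le> stress_distortion C2 \<alpha> \<gamma>2" using iff2[rule_format, of \<gamma>2] \<gamma>2 by simp
  also have "\<dots> \<le> stress_distortion C1 \<alpha> \<gamma>2" using dominated \<gamma>2 by simp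
  finally have "\<gamma>1 \<le> \<gamma>2" using iff1[rule_format, of \<gamma>2] \<gamma>2 by simp
  moreover have "\<beta> \<le> \<gamma>2"
    using LTD
  proof
    assume "LTD1 C1"
    then have "stress_distortion C1 \<alpha> \<gamma>1 \<le> \<gamma>1"
      using \<alpha>01 \<gamma>1 C1\<alpha> by (intro LTD1_stress_distortion_le[of C1 \<alpha> \<gamma>1]) auto
    then show ?thesis using iff1[rule_format, of \<gamma>1] \<gamma>1 \<open>\<gamma>1 \<le> \<gamma>2\<close> by simp
  next
    assume "LTD1 C2"
    then have "stress_distortion C2 \<alpha> \<gamma>2 \<le> \<gamma>2"
      using \<alpha>01 \<gamma>2 C2\<alpha> by (intro LTD1_stress_distortion_le[of C2 \<alpha> \<gamma>2]) auto
    then show ?thesis using iff2[rule_format, of \<gamma>2] \<gamma>2 by simp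
  qed
  ultimately show ?thesis using that \<gamma>1 \<gamma>2 by blast
qed

theorem theorem4p2:
  fixes M1 :: "'a measure" and M2 :: "'b measure"
    and X1 :: "'a \<Rightarrow> 'd::finite \<Rightarrow> real" and Y1 :: "'a \<Rightarrow> real"
    and X2 :: "'b \<Rightarrow> 'd \<Rightarrow> real" and Y2 :: "'b \<Rightarrow> real"
    and C1 C2 :: "('d \<Rightarrow> real) \<Rightarrow> real \<Rightarrow> real"
    and \<alpha> :: "'d \<Rightarrow> real"
  assumes P1: "prob_space M1" and P2: "prob_space M2"
    and mX1: "\<And>i. (\<lambda>\<omega>. X1 \<omega> i) \<in> borel_measurable M1" and mY1: "Y1 \<in> borel_measurable M1"
    and mX2: "\<And>i. (\<lambda>\<omega>. X2 \<omega> i) \<in> borel_measurable M2" and mY2: "Y2 \<in> borel_measurable M2"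
    and cont1: "cont_marginals M1 X1 Y1" and cont2: "cont_marginals M2 X2 Y2"
    and cop1: "is_copula_of M1 X1 Y1 C1" and cop2: "is_copula_of M2 X2 Y2 C2"
    and alpha: "\<And>i. 0 \<le> \<alpha> i \<and> \<alpha> i < 1"
    and C1a: "C1 \<alpha> 1 < 1" and C2a: "C2 \<alpha> 1 < 1"
    and LTD: "LTD1 C1 \<or> LTD1 C2"
    and l: "\<And>v. 0 < v \<Longrightarrow> v \<le> 1 \<Longrightarrow>
              (v - C1 \<alpha> v) / (v - C2 \<alpha> v) \<ge> (1 - C1 \<alpha> 1) / (1 - C2 \<alpha> 1)"
  shows "(disp_le M1 Y1 M2 Y2 \<longrightarrow>
            (\<forall>\<beta>. 0 < \<beta> \<and> \<beta> < 1 \<longrightarrow> DeltaVCoVaR M1 X1 Y1 \<alpha> \<beta> \<le> DeltaVCoVaR M2 X2 Y2 \<alpha> \<beta>))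
       \<and> (star_le M1 Y1 M2 Y2 \<longrightarrow>
            (\<forall>\<beta>. 0 < \<beta> \<and> \<beta> < 1 \<longrightarrow> DeltaR_VCoVaR M1 X1 Y1 \<alpha> \<beta> \<le> DeltaR_VCoVaR M2 X2 Y2 \<alpha> \<beta>))"
proof -
  have m1: "copula_model M1 X1 Y1 C1" and m2: "copula_model M2 X2 Y2 C2"
    using assms by (simp_all add: copula_model_def copula_model_axioms_def)
  have dominated: "stress_distortion C2 \<alpha> v \<le> stress_distortion C1 \<alpha> v" if "0 < v" "v \<le> 1" for v
    unfolding stress_distortion_def
    using that C1a C2a alpha copula_model.copula_le[OF m2, of \<alpha> v]
    by (intro divide_le_divide_swap[OF _ _ _ l]) (auto intro: less_imp_le)
  note mono1 = copula_model.mono_on_VaR_Y[OF m1] and mono2 = copula_model.mono_on_VaR_Y[OF m2]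
  show ?thesis
  proof (intro conjI impI allI)
    fix \<beta> :: real assume "0 < \<beta> \<and> \<beta> < 1"
    then have \<beta>: "0 < \<beta>" "\<beta> < 1" by auto
    obtain \<gamma>1 \<gamma>2 where \<gamma>: "0 < \<gamma>1" "\<gamma>1 \<le> \<gamma>2" "\<beta> \<le> \<gamma>2" "\<gamma>2 < 1"
      and eq: "VCoVaR M1 X1 Y1 \<alpha> \<beta> = VaR M1 Y1 \<gamma>1" "VCoVaR M2 X2 Y2 \<alpha> \<beta> = VaR M2 Y2 \<gamma>2"
      by (rule VCoVaR_levels_ordered[OF m1 m2 alpha C1a C2a LTD _ \<beta>]) (rule dominated)
    show "DeltaVCoVaR M1 X1 Y1 \<alpha> \<beta> \<le> DeltaVCoVaR M2 X2 Y2 \<alpha> \<beta>" if "disp_le M1 Y1 M2 Y2"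
      using that unfolding DeltaVCoVaR_def eq disp_le_def
      by (rule dispersive_increment_le[OF _ mono1 mono2 \<beta>(1) \<gamma>])
    show "DeltaR_VCoVaR M1 X1 Y1 \<alpha> \<beta> \<le> DeltaR_VCoVaR M2 X2 Y2 \<alpha> \<beta>" if "star_le M1 Y1 M2 Y2"
      using that unfolding DeltaR_VCoVaR_def DeltaVCoVaR_def eq star_le_def
      by (intro star_relative_increment_le[OF _ _ mono1 mono2 \<beta>(1) \<gamma>]) auto
  qed
qed

end
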